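(* Let $m$ be an odd positive integer and let $r,s\in\mathbb{Z}$ satisfy $2^{-1}+r^2+s^2\equiv 0\pmod m$, where $2^{-1}$ is the inverse of $2$ modulo $m$. Every $\mathbf{q}\in H_{1,2,2}$ is congruent modulo $mH_{1,2,2}$ to an element $q_1+q_2\mathbf{i}+q_3\sqrt2\,\mathbf{j}+q_4\sqrt2\,\mathbf{k}$ with $q_1,\dots,q_4\in\mathbb{Z}$; define $$\tau(\mathbf{q})=\begin{pmatrix}\alpha&\beta\\ \gamma&\delta\end{pmatrix},\quad \alpha=q_1-2rq_3-2sq_4,\ \beta=q_2-2sq_3+2rq_4,\ \gamma=-q_2-2sq_3+2rq_4,\ \delta=q_1+2rq_3+2sq_4,$$ with entries taken modulo $m$. Then $\tau$ is a well-defined ring isomorphism from $H_{1,2,2}/mH_{1,2,2}$ onto the ring $M_2(\mathbb{Z}/m\mathbb{Z})$ of $2\times2$ matrices over $\mathbb{Z}/m\mathbb{Z}$, and $\det\tau(\mathbf{q})\equiv N(\mathbf{q})\pmod m$ for all $\mathbf{q}\in H_{1,2,2}$.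
   Context: Let $\mathbf{i},\mathbf{j},\mathbf{k}$ be the standard quaternion units; $\overline{\mathbf{q}}$ is quaternion conjugation and $N(\mathbf{q})=\mathbf{q}\overline{\mathbf{q}}$. $H_{1,2,2}$ is the subring of the quaternions equal to the $\mathbb{Z}$-module generated by $\mathbf{v}_1=1$, $\mathbf{v}_2=\mathbf{i}$, $\mathbf{v}_3=\tfrac12(1+\mathbf{i}+\sqrt2\,\mathbf{j})$, $\mathbf{v}_4=\tfrac12(1+\mathbf{i}+\sqrt2\,\mathbf{k})$; the norm takes integer values on it. Such $r,s$ exist for every odd $m$. *)

theory Defs
  imports "HOL-Analysis.Determinants" "HOL-Number_Theory.Cong"
begin

datatype quat = Quat (qre: real) (qi: real) (qj: real) (qk: real)

definition qadd :: "quat \<Rightarrow> quat \<Rightarrow> quat" where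
  "qadd p q = Quat (qre p + qre q) (qi p + qi q) (qj p + qj q) (qk p + qk q)"

definition qsub :: "quat \<Rightarrow> quat \<Rightarrow> quat" where
  "qsub p q = Quat (qre p - qre q) (qi p - qi q) (qj p - qj q) (qk p - qk q)"

definition qmul :: "quat \<Rightarrow> quat \<Rightarrow> quat" where
  "qmul p q = Quat
     (qre p * qre q - qi p * qi q - qj p * qj q - qk p * qk q)
     (qre p * qi q + qi p * qre q + qj p * qk q - qk p * qj q)
     (qre p * qj q - qi p * qk q + qj p * qre q + qk p * qi q)
     (qre p * qk q + qi p * qj q - qj p * qi q + qk p * qre q)"

definition qcnj :: "quat \<Rightarrow> quat" where
  "qcnj q = Quat (qre q) (- qi q) (- qj q) (- qk q)"

text \<open>N(q) = q * conj q (a quaternion, real in fact).\<close>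
definition qN :: "quat \<Rightarrow> quat" where
  "qN q = qmul q (qcnj q)"

definition qof_int :: "int \<Rightarrow> quat" where
  "qof_int n = Quat (of_int n) 0 0 0"

definition qscale :: "int \<Rightarrow> quat \<Rightarrow> quat" where
  "qscale n q = qmul (qof_int n) q"

definition qone :: quat where "qone = Quat 1 0 0 0"

definition v1 :: quat where "v1 = Quat 1 0 0 0"
definition v2 :: quat where "v2 = Quat 0 1 0 0"
definition v3 :: quat where "v3 = Quat (1/2) (1/2) (sqrt 2 / 2) 0"
definition v4 :: quat where "v4 = Quat (1/2) (1/2) 0 (sqrt 2 / 2)"

definition H122 :: "quat set" where
  "H122 = {qadd (qadd (qscale x1 v1) (qscale x2 v2)) (qadd (qscale x3 v3) (qscale x4 v4))
           | x1 x2 x3 x4. True}"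

definition mH :: "int \<Rightarrow> quat set" where
  "mH m = qscale m ` H122"

definition intform :: "int \<Rightarrow> int \<Rightarrow> int \<Rightarrow> int \<Rightarrow> quat" where
  "intform q1 q2 q3 q4 = Quat (of_int q1) (of_int q2) (of_int q3 * sqrt 2) (of_int q4 * sqrt 2)"

text \<open>The matrix tau for the representative q1 + q2 i + q3 sqrt2 j + q4 sqrt2 k
  (integer entries, to be read modulo m).\<close>
definition tau :: "int \<Rightarrow> int \<Rightarrow> int \<Rightarrow> int \<Rightarrow> int \<Rightarrow> int \<Rightarrow> int ^ 2 ^ 2" where
  "tau r s q1 q2 q3 q4 =
     (\<chi> i j. if i = 1 then (if j = 1 then q1 - 2 * r * q3 - 2 * s * q4 else q2 - 2 * s * q3 + 2 * r * q4)
             else (if j = 1 then - q2 - 2 * s * q3 + 2 * r * q4 else q1 + 2 * r * q3 + 2 * s * q4))"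

text \<open>Entrywise congruence of integer matrices modulo m, i.e. equality in M_2(Z/mZ).\<close>
definition mcong :: "int \<Rightarrow> int ^ 2 ^ 2 \<Rightarrow> int ^ 2 ^ 2 \<Rightarrow> bool" where
  "mcong m A B \<longleftrightarrow> (\<forall>i j. [A $ i $ j = B $ i $ j] (mod m))"

end

theory Submission
  imports Defs
begin

(* In the basis v1, v2, v3, v4 the lattice H_{1,2,2} is Z^4 and m H_{1,2,2} is (m Z)^4, so congruence
   modulo m H_{1,2,2} is coordinatewise congruence, and sums, products and conjugates of lattice
   elements have integer polynomial coordinates. The elements a + b i + c sqrt2 j + d sqrt2 k form a
   subring with coordinates (a - c - d, b - c - d, 2c, 2d); as 2 is invertible mod m, every class
   contains one of them, unique mod m. On these representatives tau is additive, and multiplicative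
   and carries the norm to the determinant up to multiples of 2(r^2 + s^2) + 1, which vanishes
   mod m. Bijectivity mod m: tau has trivial kernel because 2 and r^2 + s^2 are units mod m, and an
   explicit preimage uses 1/2 = -(r^2 + s^2) mod m. *)

definition H122_comb :: "int \<Rightarrow> int \<Rightarrow> int \<Rightarrow> int \<Rightarrow> quat" where
  "H122_comb x1 x2 x3 x4 = qadd (qadd (qscale x1 v1) (qscale x2 v2)) (qadd (qscale x3 v3) (qscale x4 v4))"

lemma H122_comb_Quat:
  "H122_comb x1 x2 x3 x4 = Quat ((2 * of_int x1 + of_int x3 + of_int x4) / 2)
     ((2 * of_int x2 + of_int x3 + of_int x4) / 2) (of_int x3 * sqrt 2 / 2) (of_int x4 * sqrt 2 / 2)"
  by (simp add: H122_comb_def qadd_def qscale_def qmul_def qof_int_def v1_def v2_def v3_def v4_def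
      field_simps)

lemma H122_comb_eq_iff:
  "H122_comb x1 x2 x3 x4 = H122_comb y1 y2 y3 y4 \<longleftrightarrow> x1 = y1 \<and> x2 = y2 \<and> x3 = y3 \<and> x4 = y4"
proof
  assume "H122_comb x1 x2 x3 x4 = H122_comb y1 y2 y3 y4"
  then have "x3 = y3" "x4 = y4"
    and "2 * real_of_int x1 + x3 + x4 = 2 * y1 + y3 + y4" "2 * real_of_int x2 + x3 + x4 = 2 * y2 + y3 + y4"
    by (simp_all add: H122_comb_Quat)
  then show "x1 = y1 \<and> x2 = y2 \<and> x3 = y3 \<and> x4 = y4"
    by simp
qed simp

lemma H122E:
  assumes "q \<in> H122"
  obtains x1 x2 x3 x4 where "q = H122_comb x1 x2 x3 x4"
  using assms by (auto simp: H122_def H122_comb_def)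

lemma H122_comb_in_H122 [simp]: "H122_comb x1 x2 x3 x4 \<in> H122"
  by (auto simp: H122_def H122_comb_def)

lemma qscale_H122_comb:
  "qscale m (H122_comb x1 x2 x3 x4) = H122_comb (m * x1) (m * x2) (m * x3) (m * x4)"
  by (simp add: H122_comb_Quat qscale_def qmul_def qof_int_def field_simps)

lemma qsub_H122_comb:
  "qsub (H122_comb x1 x2 x3 x4) (H122_comb y1 y2 y3 y4) = H122_comb (x1 - y1) (x2 - y2) (x3 - y3) (x4 - y4)"
  by (simp add: H122_comb_Quat qsub_def field_simps)

lemma qadd_H122_comb:
  "qadd (H122_comb x1 x2 x3 x4) (H122_comb y1 y2 y3 y4) = H122_comb (x1 + y1) (x2 + y2) (x3 + y3) (x4 + y4)"
  by (simp add: H122_comb_Quat qadd_def field_simps)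

lemma qmul_H122_comb:
  "qmul (H122_comb x1 x2 x3 x4) (H122_comb y1 y2 y3 y4) = H122_comb
     (x1*y1 - x2*y2 - x2*y3 - x3*y3 - x4*y2 - x4*y3 - x4*y4)
     (x1*y2 + x2*y1 + x2*y4 + x3*y2 + x3*y4 - x4*y3)
     (x1*y3 - x2*y4 + x3*y1 + x3*y3 + x4*y2 + x4*y3)
     (x1*y4 + x2*y3 - x3*y2 + x4*y1 + x4*y3 + x4*y4)"
  by (simp add: H122_comb_Quat qmul_def field_simps power2_eq_square)

lemma qcnj_H122_comb: "qcnj (H122_comb x1 x2 x3 x4) = H122_comb (x1 + x3 + x4) (- x2) (- x3) (- x4)"
  by (simp add: H122_comb_Quat qcnj_def field_simps)

lemma qN_H122_comb:
  "qN (H122_comb x1 x2 x3 x4) = qof_int (x1^2 + x2^2 + x3^2 + x4^2 + x1*x3 + x1*x4 + x2*x3 + x2*x4 + x3*x4)"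
  by (simp add: H122_comb_Quat qN_def qmul_def qcnj_def qof_int_def field_simps power2_eq_square)

lemma H122_comb_in_mH_iff:
  "H122_comb x1 x2 x3 x4 \<in> mH m \<longleftrightarrow> m dvd x1 \<and> m dvd x2 \<and> m dvd x3 \<and> m dvd x4"
proof
  assume "H122_comb x1 x2 x3 x4 \<in> mH m"
  then obtain y1 y2 y3 y4 where "H122_comb x1 x2 x3 x4 = qscale m (H122_comb y1 y2 y3 y4)"
    by (auto simp: mH_def elim!: H122E)
  then show "m dvd x1 \<and> m dvd x2 \<and> m dvd x3 \<and> m dvd x4"
    by (simp add: qscale_H122_comb H122_comb_eq_iff)
next
  assume "m dvd x1 \<and> m dvd x2 \<and> m dvd x3 \<and> m dvd x4"
  then obtain y1 y2 y3 y4 where "H122_comb x1 x2 x3 x4 = qscale m (H122_comb y1 y2 y3 y4)"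
    by (auto simp: qscale_H122_comb elim!: dvdE)
  then show "H122_comb x1 x2 x3 x4 \<in> mH m"
    by (simp add: mH_def)
qed

lemma intform_H122_comb: "intform a b c d = H122_comb (a - c - d) (b - c - d) (2 * c) (2 * d)"
  by (simp add: H122_comb_Quat intform_def field_simps)

lemma qof_int_H122_comb: "qof_int n = H122_comb n 0 0 0"
  by (simp add: H122_comb_Quat qof_int_def)

lemma qone_intform: "qone = intform 1 0 0 0"
  by (simp add: qone_def intform_def)

abbreviation qcong :: "int \<Rightarrow> quat \<Rightarrow> quat \<Rightarrow> bool" where
  "qcong m p q \<equiv> qsub p q \<in> mH m"

lemma qcong_H122_comb_iff:
  "qcong m (H122_comb x1 x2 x3 x4) (H122_comb y1 y2 y3 y4) \<longleftrightarrow>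
     [x1 = y1] (mod m) \<and> [x2 = y2] (mod m) \<and> [x3 = y3] (mod m) \<and> [x4 = y4] (mod m)"
  by (simp add: qsub_H122_comb H122_comb_in_mH_iff cong_iff_dvd_diff)

lemma qcong_refl: "q \<in> H122 \<Longrightarrow> qcong m q q"
  by (auto elim!: H122E simp: qcong_H122_comb_iff)

lemma qcong_sym: "p \<in> H122 \<Longrightarrow> q \<in> H122 \<Longrightarrow> qcong m p q \<Longrightarrow> qcong m q p"
  by (auto elim!: H122E simp: qcong_H122_comb_iff cong_sym_eq)

lemma qcong_trans:
  "p \<in> H122 \<Longrightarrow> q \<in> H122 \<Longrightarrow> u \<in> H122 \<Longrightarrow> qcong m p q \<Longrightarrow> qcong m q u \<Longrightarrow> qcong m p u"
  by (auto elim!: H122E simp: qcong_H122_comb_iff elim: cong_trans)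

lemma qadd_in_H122: "p \<in> H122 \<Longrightarrow> q \<in> H122 \<Longrightarrow> qadd p q \<in> H122"
  by (auto elim!: H122E simp: qadd_H122_comb)

lemma qmul_in_H122: "p \<in> H122 \<Longrightarrow> q \<in> H122 \<Longrightarrow> qmul p q \<in> H122"
  by (auto elim!: H122E simp: qmul_H122_comb)

lemma qcnj_in_H122: "q \<in> H122 \<Longrightarrow> qcnj q \<in> H122"
  by (auto elim!: H122E simp: qcnj_H122_comb)

lemma qcong_qadd:
  assumes "p \<in> H122" "q \<in> H122" "p' \<in> H122" "q' \<in> H122" "qcong m p q" "qcong m p' q'"
  shows "qcong m (qadd p p') (qadd q q')"
  using assms by (auto elim!: H122E simp: qadd_H122_comb qcong_H122_comb_iff intro: cong_add)

lemma qcong_qmul: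
  assumes "p \<in> H122" "q \<in> H122" "p' \<in> H122" "q' \<in> H122" "qcong m p q" "qcong m p' q'"
  shows "qcong m (qmul p p') (qmul q q')"
  using assms
  by (auto elim!: H122E simp: qmul_H122_comb qcong_H122_comb_iff intro!: cong_add cong_diff cong_mult)

lemma qcong_qcnj: "p \<in> H122 \<Longrightarrow> q \<in> H122 \<Longrightarrow> qcong m p q \<Longrightarrow> qcong m (qcnj p) (qcnj q)"
  by (auto elim!: H122E simp: qcnj_H122_comb qcong_H122_comb_iff
      intro!: cong_add cong_minus_minus_iff[THEN iffD2])

lemma qcong_qN: "p \<in> H122 \<Longrightarrow> q \<in> H122 \<Longrightarrow> qcong m p q \<Longrightarrow> qcong m (qN p) (qN q)"
  unfolding qN_def by (intro qcong_qmul qcong_qcnj qcnj_in_H122)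

lemma H122_qN_integral: "q \<in> H122 \<Longrightarrow> \<exists>n. qN q = qof_int n"
  by (auto elim!: H122E simp: qN_H122_comb)

lemma qcong_qof_int_iff: "qcong m (qof_int n) (qof_int k) \<longleftrightarrow> [n = k] (mod m)"
  by (simp add: qof_int_H122_comb qcong_H122_comb_iff)

lemma intform_in_H122 [simp]: "intform a b c d \<in> H122"
  by (simp add: intform_H122_comb)

lemma qadd_intform:
  "qadd (intform a b c d) (intform a' b' c' d') = intform (a + a') (b + b') (c + c') (d + d')"
  by (simp add: intform_def qadd_def algebra_simps)

lemma qmul_intform:
  "qmul (intform a b c d) (intform a' b' c' d') = intform
     (a*a' - b*b' - 2*c*c' - 2*d*d') (a*b' + b*a' + 2*c*d' - 2*d*c')
     (a*c' - b*d' + c*a' + d*b') (a*d' + b*c' - c*b' + d*a')"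
  by (simp add: intform_def qmul_def algebra_simps)

lemma qN_intform: "qN (intform a b c d) = qof_int (a^2 + b^2 + 2*c^2 + 2*d^2)"
  by (simp add: intform_def qN_def qmul_def qcnj_def qof_int_def algebra_simps power2_eq_square)

lemma exists_intform_qcong:
  assumes "[2 * h = 1] (mod m)" and "q \<in> H122"
  shows "\<exists>a b c d. qcong m q (intform a b c d)"
proof -
  obtain x1 x2 x3 x4 where q: "q = H122_comb x1 x2 x3 x4"
    using assms(2) by (rule H122E)
  have "[x = 2 * (h * x)] (mod m)" for x
    using cong_scalar_right[OF assms(1), of x] by (simp add: cong_sym_eq mult.assoc)
  then have "qcong m q (intform (x1 + h*x3 + h*x4) (x2 + h*x3 + h*x4) (h*x3) (h*x4))"
    by (simp add: q intform_H122_comb qcong_H122_comb_iff)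
  then show ?thesis by blast
qed

lemma qcong_intform_iff:
  assumes "[2 * h = 1] (mod m)"
  shows "qcong m (intform a b c d) (intform a' b' c' d') \<longleftrightarrow>
    [a = a'] (mod m) \<and> [b = b'] (mod m) \<and> [c = c'] (mod m) \<and> [d = d'] (mod m)"
proof -
  have "coprime 2 m"
    using assms by (auto simp: coprime_iff_invertible_int)
  then have half: "[2 * x = 2 * y] (mod m) \<longleftrightarrow> [x = y] (mod m)" for x y
    by (rule cong_mult_lcancel)
  have shift: "[x - c - d = y - c' - d'] (mod m) \<longleftrightarrow> [x = y] (mod m)"
    if "[c = c'] (mod m)" "[d = d'] (mod m)" for x y
  proof
    assume "[x - c - d = y - c' - d'] (mod m)"
    from cong_add[OF cong_add[OF this that(1)] that(2)] show "[x = y] (mod m)" by simp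
  qed (intro cong_diff that)
  show ?thesis
    unfolding intform_H122_comb qcong_H122_comb_iff half by (auto simp: shift)
qed

lemma cong_if_diff_multiple:
  fixes k :: int
  assumes "[k = 0] (mod m)" and "x - y = k * z"
  shows "[x = y] (mod m)"
  using assms by (simp add: cong_iff_dvd_diff cong_0_iff)

lemma coprime_of_twice_plus_one_cong_zero:
  fixes n :: int
  assumes "[2 * n + 1 = 0] (mod m)"
  shows "coprime 2 m" and "coprime n m"
proof -
  have "(2 * n) * (- 1) - 1 = - (2 * n + 1)"
    by simp
  then have "[(2 * n) * (- 1) = 1] (mod m)"
    using assms by (simp only: cong_iff_dvd_diff diff_0_right dvd_minus_iff)
  then have "coprime (2 * n) m"
    unfolding coprime_iff_invertible_int by blast
  then show "coprime 2 m" and "coprime n m"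
    by simp_all
qed

lemma twice_sum_squares_plus_one_cong_zero:
  fixes h r s :: int
  assumes "[2 * h = 1] (mod m)" and "[h + r^2 + s^2 = 0] (mod m)"
  shows "[2 * (r^2 + s^2) + 1 = 0] (mod m)"
proof -
  have "[2 * (r^2 + s^2) + 1 = 2 * (r^2 + s^2) + 2 * h] (mod m)"
    using assms(1) by (intro cong_add cong_refl) (rule cong_sym)
  also have "2 * (r^2 + s^2) + 2 * h = 2 * (h + r^2 + s^2)"
    by (simp add: algebra_simps)
  also have "[\<dots> = 2 * 0] (mod m)"
    using assms(2) by (rule cong_scalar_left)
  finally show ?thesis
    by simp
qed

lemma tau_nth:
  "tau r s a b c d $ 1 $ 1 = a - 2 * r * c - 2 * s * d"
  "tau r s a b c d $ 1 $ 2 = b - 2 * s * c + 2 * r * d"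
  "tau r s a b c d $ 2 $ 1 = - b - 2 * s * c + 2 * r * d"
  "tau r s a b c d $ 2 $ 2 = a + 2 * r * c + 2 * s * d"
  by (simp_all add: tau_def)

lemma tau_add: "tau r s (a + a') (b + b') (c + c') (d + d') = tau r s a b c d + tau r s a' b' c' d'"
  by (simp add: vec_eq_iff forall_2 tau_nth algebra_simps)

lemma tau_diff: "tau r s (a - a') (b - b') (c - c') (d - d') = tau r s a b c d - tau r s a' b' c' d'"
  by (simp add: vec_eq_iff forall_2 tau_nth algebra_simps)

lemma tau_one: "tau r s 1 0 0 0 = mat 1"
  by (simp add: vec_eq_iff forall_2 tau_nth mat_def)

lemma mcong_iff:
  "mcong m A B \<longleftrightarrow> [A$1$1 = B$1$1] (mod m) \<and> [A$1$2 = B$1$2] (mod m) \<and>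
     [A$2$1 = B$2$1] (mod m) \<and> [A$2$2 = B$2$2] (mod m)"
  by (simp add: mcong_def forall_2)

lemma mcong_trans: "mcong m A B \<Longrightarrow> mcong m B C \<Longrightarrow> mcong m A C"
  unfolding mcong_def by (meson cong_trans)

lemma mcong_iff_diff_zero: "mcong m A B \<longleftrightarrow> mcong m (A - B) 0"
  by (simp add: mcong_def cong_iff_dvd_diff cong_0_iff)

lemma mcong_if_diff_multiple:
  assumes "[k = 0] (mod m)" and "\<forall>i j. A$i$j - B$i$j = k * C$i$j"
  shows "mcong m A B"
  using assms unfolding mcong_def by (metis cong_if_diff_multiple)

lemma mat2_mult_nth: "((A :: 'a :: semiring_1 ^ 2 ^ 2) ** B) $ i $ j = A$i$1 * B$1$j + A$i$2 * B$2$j"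
  by (simp add: matrix_matrix_mult_def sum_2)

lemma tau_kernel:
  assumes "[2 * (r^2 + s^2) + 1 = 0] (mod m)" and "mcong m (tau r s a b c d) 0"
  shows "m dvd a \<and> m dvd b \<and> m dvd c \<and> m dvd d"
proof -
  define n where "n = r^2 + s^2"
  have "coprime 2 m" "coprime n m"
    using coprime_of_twice_plus_one_cong_zero[OF assms(1)] by (simp_all add: n_def)
  then have unit: "coprime m 2" "coprime m (2 * n)"
    by (simp_all add: coprime_commute)
  define \<alpha> \<beta> \<gamma> \<delta> where "\<alpha> = a - 2 * r * c - 2 * s * d" and "\<beta> = b - 2 * s * c + 2 * r * d"
    and "\<gamma> = - b - 2 * s * c + 2 * r * d" and "\<delta> = a + 2 * r * c + 2 * s * d"
  have entries: "m dvd \<alpha>" "m dvd \<beta>" "m dvd \<gamma>" "m dvd \<delta>"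
    using assms(2) by (simp_all add: mcong_iff tau_nth cong_0_iff \<alpha>_def \<beta>_def \<gamma>_def \<delta>_def)
  have "2 * a = \<alpha> + \<delta>" "2 * b = \<beta> - \<gamma>"
    and "(2 * n) * (2 * c) = r * (\<delta> - \<alpha>) - s * (\<beta> + \<gamma>)"
    and "(2 * n) * (2 * d) = s * (\<delta> - \<alpha>) + r * (\<beta> + \<gamma>)"
    by (simp_all add: n_def \<alpha>_def \<beta>_def \<gamma>_def \<delta>_def algebra_simps power2_eq_square)
  then have "m dvd 2 * a" "m dvd 2 * b" "m dvd (2 * n) * (2 * c)" "m dvd (2 * n) * (2 * d)"
    using entries by simp_all
  then show ?thesis
    by (simp only: coprime_dvd_mult_right_iff[OF unit(1)] coprime_dvd_mult_right_iff[OF unit(2)])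
qed

lemma tau_mcong_iff:
  assumes "[2 * (r^2 + s^2) + 1 = 0] (mod m)"
  shows "mcong m (tau r s a b c d) (tau r s a' b' c' d') \<longleftrightarrow>
    [a = a'] (mod m) \<and> [b = b'] (mod m) \<and> [c = c'] (mod m) \<and> [d = d'] (mod m)"
proof
  assume "mcong m (tau r s a b c d) (tau r s a' b' c' d')"
  then have "mcong m (tau r s (a - a') (b - b') (c - c') (d - d')) 0"
    by (subst tau_diff) (subst mcong_iff_diff_zero[symmetric])
  from tau_kernel[OF assms this]
  show "[a = a'] (mod m) \<and> [b = b'] (mod m) \<and> [c = c'] (mod m) \<and> [d = d'] (mod m)"
    by (simp add: cong_iff_dvd_diff)
next
  assume "[a = a'] (mod m) \<and> [b = b'] (mod m) \<and> [c = c'] (mod m) \<and> [d = d'] (mod m)"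
  then have "m dvd a - a'" "m dvd b - b'" "m dvd c - c'" "m dvd d - d'"
    by (simp_all add: cong_iff_dvd_diff)
  then have "mcong m (tau r s (a - a') (b - b') (c - c') (d - d')) 0"
    by (simp add: mcong_iff tau_nth cong_0_iff dvd_add dvd_diff dvd_mult dvd_diff_commute[of m b])
  then show "mcong m (tau r s a b c d) (tau r s a' b' c' d')"
    by (subst mcong_iff_diff_zero) (subst tau_diff[symmetric])
qed

lemma tau_mult:
  assumes k: "[2 * (r^2 + s^2) + 1 = 0] (mod m)"
  shows "mcong m
    (tau r s (a * a' - b * b' - 2 * c * c' - 2 * d * d') (a * b' + b * a' + 2 * c * d' - 2 * d * c')
       (a * c' - b * d' + c * a' + d * b') (a * d' + b * c' - c * b' + d * a'))
    (tau r s a b c d ** tau r s a' b' c' d')"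
  by (rule mcong_if_diff_multiple[OF k,
        where C = "tau r s (-2 * (c * c' + d * d')) (2 * (c * d' - c' * d)) 0 0"])
    (simp add: forall_2 mat2_mult_nth tau_nth algebra_simps power2_eq_square)

lemma det_tau_cong:
  assumes k: "[2 * (r^2 + s^2) + 1 = 0] (mod m)"
  shows "[det (tau r s a b c d) = a^2 + b^2 + 2 * c^2 + 2 * d^2] (mod m)"
  by (rule cong_if_diff_multiple[OF k, where z = "-2 * (c^2 + d^2)"])
    (simp add: det_2 tau_nth algebra_simps power2_eq_square)

(* The preimage solves tau = M using 1/2 = -(r^2 + s^2) mod m. *)
lemma tau_surj:
  assumes k: "[2 * (r^2 + s^2) + 1 = 0] (mod m)"
  shows "\<exists>a b c d. mcong m (tau r s a b c d) M"
proof -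
  define n where "n = r^2 + s^2"
  define p q u v where "p = M$1$1" and "q = M$1$2" and "u = M$2$1" and "v = M$2$2"
  define a b c d where "a = - n * (p + v)" and "b = - n * (q - u)"
    and "c = n * (r * (v - p) - s * (q + u))" and "d = n * (r * (q + u) + s * (v - p))"
  have "[a - 2 * r * c - 2 * s * d = p] (mod m)"
    by (rule cong_if_diff_multiple[OF k, where z = "(n - 1) * p - n * v"])
      (simp add: a_def c_def d_def n_def algebra_simps power2_eq_square)
  moreover have "[b - 2 * s * c + 2 * r * d = q] (mod m)"
    by (rule cong_if_diff_multiple[OF k, where z = "(n - 1) * q + n * u"])
      (simp add: b_def c_def d_def n_def algebra_simps power2_eq_square)
  moreover have "[- b - 2 * s * c + 2 * r * d = u] (mod m)"
    by (rule cong_if_diff_multiple[OF k, where z = "n * q + (n - 1) * u"])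
      (simp add: b_def c_def d_def n_def algebra_simps power2_eq_square)
  moreover have "[a + 2 * r * c + 2 * s * d = v] (mod m)"
    by (rule cong_if_diff_multiple[OF k, where z = "(n - 1) * v - n * p"])
      (simp add: a_def c_def d_def n_def algebra_simps power2_eq_square)
  ultimately have "mcong m (tau r s a b c d) M"
    by (simp add: mcong_iff tau_nth p_def q_def u_def v_def)
  then show ?thesis by blast
qed

lemma qcong_intform_iff_mcong_tau:
  assumes "[2 * h = 1] (mod m)" and "[2 * (r^2 + s^2) + 1 = 0] (mod m)"
  shows "qcong m (intform a b c d) (intform a' b' c' d') \<longleftrightarrow>
    mcong m (tau r s a b c d) (tau r s a' b' c' d')"
  by (simp add: qcong_intform_iff[OF assms(1)] tau_mcong_iff[OF assms(2)])

lemma tau_well_defined: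
  assumes "[2 * h = 1] (mod m)" and "[2 * (r^2 + s^2) + 1 = 0] (mod m)" and "q \<in> H122"
    and "qcong m q (intform a b c d)" and "qcong m q (intform a' b' c' d')"
  shows "mcong m (tau r s a b c d) (tau r s a' b' c' d')"
proof -
  have "qcong m (intform a b c d) (intform a' b' c' d')"
    using assms(3-5) by (meson qcong_sym qcong_trans intform_in_H122)
  then show ?thesis
    by (simp add: qcong_intform_iff_mcong_tau[OF assms(1,2)])
qed

lemma qcong_iff_mcong_tau:
  assumes "[2 * h = 1] (mod m)" and "[2 * (r^2 + s^2) + 1 = 0] (mod m)" and "q \<in> H122" "q' \<in> H122"
    and "qcong m q (intform a b c d)" and "qcong m q' (intform a' b' c' d')"
  shows "qcong m q q' \<longleftrightarrow> mcong m (tau r s a b c d) (tau r s a' b' c' d')"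
proof -
  have "qcong m q q' \<longleftrightarrow> qcong m (intform a b c d) (intform a' b' c' d')"
    using assms(3-6) by (meson qcong_sym qcong_trans intform_in_H122)
  then show ?thesis
    by (simp add: qcong_intform_iff_mcong_tau[OF assms(1,2)])
qed

lemma tau_qadd:
  assumes "[2 * h = 1] (mod m)" and "[2 * (r^2 + s^2) + 1 = 0] (mod m)" and "q \<in> H122" "q' \<in> H122"
    and "qcong m q (intform a b c d)" and "qcong m q' (intform a' b' c' d')"
    and "qcong m (qadd q q') (intform a'' b'' c'' d'')"
  shows "mcong m (tau r s a'' b'' c'' d'') (tau r s a b c d + tau r s a' b' c' d')"
proof -
  have sum: "qcong m (qadd q q') (intform (a + a') (b + b') (c + c') (d + d'))"
    using qcong_qadd[OF assms(3) _ assms(4) _ assms(5,6)] by (simp add: qadd_intform)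
  from tau_well_defined[OF assms(1,2) qadd_in_H122[OF assms(3,4)] assms(7) sum]
  show ?thesis
    by (simp add: tau_add)
qed

lemma tau_qmul:
  assumes "[2 * h = 1] (mod m)" and "[2 * (r^2 + s^2) + 1 = 0] (mod m)" and "q \<in> H122" "q' \<in> H122"
    and "qcong m q (intform a b c d)" and "qcong m q' (intform a' b' c' d')"
    and "qcong m (qmul q q') (intform a'' b'' c'' d'')"
  shows "mcong m (tau r s a'' b'' c'' d'') (tau r s a b c d ** tau r s a' b' c' d')"
proof -
  have prod: "qcong m (qmul q q') (intform (a * a' - b * b' - 2 * c * c' - 2 * d * d')
      (a * b' + b * a' + 2 * c * d' - 2 * d * c') (a * c' - b * d' + c * a' + d * b')
      (a * d' + b * c' - c * b' + d * a'))"
    using qcong_qmul[OF assms(3) _ assms(4) _ assms(5,6)] by (simp add: qmul_intform)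
  from tau_well_defined[OF assms(1,2) qmul_in_H122[OF assms(3,4)] assms(7) prod] tau_mult[OF assms(2)]
  show ?thesis
    by (rule mcong_trans)
qed

lemma tau_qone:
  assumes "[2 * h = 1] (mod m)" and "[2 * (r^2 + s^2) + 1 = 0] (mod m)"
    and "qcong m qone (intform a b c d)"
  shows "mcong m (tau r s a b c d) (mat 1)"
  using tau_well_defined[OF assms(1,2) _ assms(3), of 1 0 0 0]
  by (simp add: qone_intform qcong_refl tau_one)

lemma tau_surj_on_classes:
  assumes "[2 * (r^2 + s^2) + 1 = 0] (mod m)"
  shows "\<exists>q\<in>H122. \<exists>a b c d. qcong m q (intform a b c d) \<and> mcong m (tau r s a b c d) M"
  using tau_surj[OF assms] by (meson intform_in_H122 qcong_refl)

lemma det_tau_qN: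
  assumes "[2 * (r^2 + s^2) + 1 = 0] (mod m)" and "q \<in> H122" and "qcong m q (intform a b c d)"
  shows "\<exists>n. qN q = qof_int n \<and> [det (tau r s a b c d) = n] (mod m)"
proof -
  obtain n where n: "qN q = qof_int n"
    using H122_qN_integral[OF assms(2)] by blast
  have "qcong m (qN q) (qN (intform a b c d))"
    using qcong_qN[OF assms(2) _ assms(3)] by simp
  then have "[n = a^2 + b^2 + 2 * c^2 + 2 * d^2] (mod m)"
    by (simp add: n qN_intform qcong_qof_int_iff)
  with det_tau_cong[OF assms(1)] have "[det (tau r s a b c d) = n] (mod m)"
    by (metis cong_sym cong_trans)
  with n show ?thesis
    by blast
qed

theorem theorem26:
  fixes m r s h :: int
  assumes "m > 0" and "odd m"
    and "[2 * h = 1] (mod m)"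
    and "[h + r^2 + s^2 = 0] (mod m)"
  shows
    "(\<forall>q\<in>H122. \<exists>a b c d. qsub q (intform a b c d) \<in> mH m)
   \<and> (\<forall>q\<in>H122. \<forall>q'\<in>H122. \<forall>a b c d a' b' c' d'.
        qsub q (intform a b c d) \<in> mH m \<longrightarrow> qsub q' (intform a' b' c' d') \<in> mH m \<longrightarrow>
        (qsub q q' \<in> mH m \<longleftrightarrow> mcong m (tau r s a b c d) (tau r s a' b' c' d')))
   \<and> (\<forall>q\<in>H122. \<forall>q'\<in>H122. \<forall>a b c d a' b' c' d' a'' b'' c'' d''.
        qsub q (intform a b c d) \<in> mH m \<longrightarrow> qsub q' (intform a' b' c' d') \<in> mH m \<longrightarrow>
        qsub (qadd q q') (intform a'' b'' c'' d'') \<in> mH m \<longrightarrow>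
        mcong m (tau r s a'' b'' c'' d'') (tau r s a b c d + tau r s a' b' c' d'))
   \<and> (\<forall>q\<in>H122. \<forall>q'\<in>H122. \<forall>a b c d a' b' c' d' a'' b'' c'' d''.
        qsub q (intform a b c d) \<in> mH m \<longrightarrow> qsub q' (intform a' b' c' d') \<in> mH m \<longrightarrow>
        qsub (qmul q q') (intform a'' b'' c'' d'') \<in> mH m \<longrightarrow>
        mcong m (tau r s a'' b'' c'' d'') (tau r s a b c d ** tau r s a' b' c' d'))
   \<and> (\<forall>a b c d. qsub qone (intform a b c d) \<in> mH m \<longrightarrow>
        mcong m (tau r s a b c d) (mat 1))
   \<and> (\<forall>M :: int ^ 2 ^ 2. \<exists>q\<in>H122. \<exists>a b c d.
        qsub q (intform a b c d) \<in> mH m \<and> mcong m (tau r s a b c d) M)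
   \<and> (\<forall>q\<in>H122. \<forall>a b c d. qsub q (intform a b c d) \<in> mH m \<longrightarrow>
        (\<exists>n::int. qN q = qof_int n \<and> [det (tau r s a b c d) = n] (mod m)))"
proof -
  note half = assms(3)
  note k = twice_sum_squares_plus_one_cong_zero[OF assms(3,4)]
  show ?thesis
    by (intro conjI ballI allI impI exists_intform_qcong[OF half] qcong_iff_mcong_tau[OF half k]
        tau_qadd[OF half k] tau_qmul[OF half k] tau_qone[OF half k] tau_surj_on_classes[OF k]
        det_tau_qN[OF k])
qed

end
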